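(* Let $\sim$ be a right congruence of finite index on $\Sigma^*$ with suffix expansion $\approx$. If $\sim$ has a critical tuple, then $|\Sigma^{\le n}/{\approx}|$ grows exponentially, and there exists a critical tuple $(u_2,v_2,u,v)$ in $\sim$ such that $u_2u\sim u_2wu$ and $v_2u\sim v_2wu$ for all $w\in\{u,v\}^*$.
   Context: Suffix expansion: $a_1\cdots a_n\approx b_1\cdots b_m$ iff $n=m$ and $a_i\cdots a_n\sim b_i\cdots b_n$ for all $i$. A critical tuple in a right congruence $\sim$ is $(u_2,v_2,u,v)$ with $|u_2|=|v_2|\ge1$, $u=u_1u_2$, $v=v_1v_2$ for some $u_1,v_1$, and $u_2w\not\sim v_2w$ for all $w\in\{u,v\}^*$. Exponential growth of $\gamma$: $\gamma(n)\ge c^n$ for some $c>1$ and infinitely many $n$. *)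

theory Defs
  imports Complex_Main
begin

definition right_congruence :: "('a list \<Rightarrow> 'a list \<Rightarrow> bool) \<Rightarrow> bool" where
  "right_congruence R \<longleftrightarrow> equivp R \<and> (\<forall>x y z. R x y \<longrightarrow> R (x @ z) (y @ z))"

definition finite_index :: "('a list \<Rightarrow> 'a list \<Rightarrow> bool) \<Rightarrow> bool" where
  "finite_index R \<longleftrightarrow> finite (UNIV // {(x, y). R x y})"

definition suffix_exp :: "('a list \<Rightarrow> 'a list \<Rightarrow> bool) \<Rightarrow> 'a list \<Rightarrow> 'a list \<Rightarrow> bool" where
  "suffix_exp R x y \<longleftrightarrow> length x = length y \<and> (\<forall>i < length x. R (drop i x) (drop i y))"

definition word_star :: "'a list set \<Rightarrow> 'a list set" where
  "word_star A = {concat ws | ws. set ws \<subseteq> A}"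

definition critical_tuple ::
  "('a list \<Rightarrow> 'a list \<Rightarrow> bool) \<Rightarrow> 'a list \<Rightarrow> 'a list \<Rightarrow> 'a list \<Rightarrow> 'a list \<Rightarrow> bool" where
  "critical_tuple R u2 v2 u v \<longleftrightarrow>
     length u2 = length v2 \<and> length u2 \<ge> 1 \<and>
     (\<exists>u1. u = u1 @ u2) \<and> (\<exists>v1. v = v1 @ v2) \<and>
     (\<forall>w \<in> word_star {u, v}. \<not> R (u2 @ w) (v2 @ w))"

definition exp_growth :: "(nat \<Rightarrow> nat) \<Rightarrow> bool" where
  "exp_growth \<gamma> \<longleftrightarrow> (\<exists>c::real. c > 1 \<and> infinite {n. real (\<gamma> n) \<ge> c ^ n})"

definition suffix_growth :: "('a list \<Rightarrow> 'a list \<Rightarrow> bool) \<Rightarrow> nat \<Rightarrow> nat" where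
  "suffix_growth R n = card ({xs. length xs \<le> n} // {(x, y). suffix_exp R x y})"

end

theory Submission
  imports Defs "HOL-Library.Infinite_Set"
begin

text \<open>
  Growth: for a critical tuple \<open>(u\<^sub>2, v\<^sub>2, u, v)\<close>, the \<open>2\<^sup>m\<close> words made of \<open>m\<close> blocks
  \<open>uv\<close> or \<open>vu\<close> are pairwise inequivalent under suffix expansion: at the last block where
  two of them differ, they have the suffixes \<open>u\<^sub>2 s\<close> and \<open>v\<^sub>2 s\<close> at the same position,
  with \<open>s \<in> {u, v}\<^sup>*\<close>.

  Stabilisation: words act on the finitely many classes of \<open>\<sim>\<close> by right multiplication.
  Take an idempotent \<open>e \<in> {u, v}\<^sup>*\<close> whose action has minimal image. For every
  \<open>x \<in> {u, v}\<^sup>*\<close> a suitable power of \<open>e x e\<close> is idempotent, starts and ends with \<open>e\<close> and,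
  by minimality of the image, acts exactly as \<open>e\<close>. Doing this for \<open>x = u\<close> and \<open>x = v\<close> yields words
  \<open>h\<^sub>u = \<dots> u e\<close> and \<open>h\<^sub>v = \<dots> v e\<close> acting as \<open>e\<close>. Then \<open>(u\<^sub>2 e, v\<^sub>2 e, h\<^sub>u, h\<^sub>v)\<close> is again
  critical, and \<open>w h\<^sub>u\<close> acts as \<open>e\<close>, hence as \<open>h\<^sub>u\<close>, for every \<open>w \<in> {h\<^sub>u, h\<^sub>v}\<^sup>*\<close>.
\<close>

lemma Nil_in_word_star: "[] \<in> word_star A"
  unfolding word_star_def by (auto intro: exI[of _ "[]"])

lemma word_star_base: "x \<in> A \<Longrightarrow> x \<in> word_star A"
  unfolding word_star_def by (auto intro!: exI[of _ "[x]"])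

lemma append_in_word_star:
  assumes "x \<in> word_star A" and "y \<in> word_star A"
  shows "x @ y \<in> word_star A"
proof -
  obtain xs ys where "x = concat xs" "set xs \<subseteq> A" "y = concat ys" "set ys \<subseteq> A"
    using assms unfolding word_star_def by auto
  then show ?thesis
    unfolding word_star_def by (auto intro!: exI[of _ "xs @ ys"])
qed

lemma concat_in_word_star: "set ws \<subseteq> word_star A \<Longrightarrow> concat ws \<in> word_star A"
  by (induction ws) (auto intro: Nil_in_word_star append_in_word_star)

lemma word_star_subset: "A \<subseteq> word_star B \<Longrightarrow> word_star A \<subseteq> word_star B"
  unfolding word_star_def[of A] using concat_in_word_star[of _ B] by auto

lemma word_star_induct [consumes 1, case_names Nil append]:
  assumes "w \<in> word_star A"
    and "P []"
    and "\<And>a w. a \<in> A \<Longrightarrow> P w \<Longrightarrow> P (a @ w)"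
  shows "P w"
proof -
  obtain ws where "w = concat ws" "set ws \<subseteq> A"
    using assms(1) unfolding word_star_def by auto
  then show ?thesis
    using assms(2,3) by (induction ws arbitrary: w) auto
qed

definition word_power :: "'a list \<Rightarrow> nat \<Rightarrow> 'a list" where
  "word_power x n = concat (replicate n x)"

lemma word_power_add: "word_power x (m + n) = word_power x m @ word_power x n"
  by (simp add: word_power_def replicate_add)

lemma word_power_Suc: "word_power x (Suc n) = x @ word_power x n"
  by (simp add: word_power_def)

lemma word_power_Suc': "word_power x (Suc n) = word_power x n @ x"
  using word_power_add[of x n 1] by (simp add: word_power_def)

lemma word_power_in_word_star: "x \<in> word_star A \<Longrightarrow> word_power x n \<in> word_star A"
  unfolding word_power_def by (rule concat_in_word_star) auto

lemma critical_tuple_append: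
  assumes crit: "critical_tuple R u2 v2 u v"
    and e: "e \<in> word_star {u, v}"
    and hu: "x @ u @ e \<in> word_star {u, v}"
    and hv: "y @ v @ e \<in> word_star {u, v}"
  shows "critical_tuple R (u2 @ e) (v2 @ e) (x @ u @ e) (y @ v @ e)"
proof -
  obtain u1 v1 where len: "length u2 = length v2" "length u2 \<ge> 1"
    and uv: "u = u1 @ u2" "v = v1 @ v2"
    and apart: "\<forall>w \<in> word_star {u, v}. \<not> R (u2 @ w) (v2 @ w)"
    using crit unfolding critical_tuple_def by blast
  have "e @ w \<in> word_star {u, v}" if "w \<in> word_star {x @ u @ e, y @ v @ e}" for w
    using that word_star_subset[of "{x @ u @ e, y @ v @ e}" "{u, v}"] hu hv e
    by (auto intro: append_in_word_star)
  then show ?thesis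
    using len apart unfolding critical_tuple_def uv by fastforce
qed

lemma equivp_suffix_exp:
  assumes "equivp R"
  shows "equivp (suffix_exp R)"
proof (intro equivpI reflpI sympI transpI)
  show "suffix_exp R x x" for x
    using equivp_reflp[OF assms] by (simp add: suffix_exp_def)
  show "suffix_exp R y x" if "suffix_exp R x y" for x y
    using that equivp_symp[OF assms] by (simp add: suffix_exp_def)
  show "suffix_exp R x z" if "suffix_exp R x y" and "suffix_exp R y z" for x y z
    using that equivp_transp[OF assms] unfolding suffix_exp_def by metis
qed

lemma suffix_exp_appendD:
  assumes "length a = length b" and "suffix_exp R (a @ x) (b @ y)"
  shows "suffix_exp R x y"
proof -
  have related: "\<forall>j < length (a @ x). R (drop j (a @ x)) (drop j (b @ y))"
    and "length x = length y"
    using assms unfolding suffix_exp_def by auto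
  moreover have "R (drop i x) (drop i y)" if "i < length x" for i
    using related[rule_format, of "length a + i"] that assms(1) by simp
  ultimately show ?thesis
    unfolding suffix_exp_def by simp
qed

lemma critical_tuple_not_suffix_exp:
  assumes crit: "critical_tuple R u2 v2 u v"
    and s: "s \<in> word_star {u, v}"
    and len: "length (a @ u) = length (b @ v)"
  shows "\<not> suffix_exp R (a @ u @ s) (b @ v @ s)"
proof
  assume exp: "suffix_exp R (a @ u @ s) (b @ v @ s)"
  obtain u1 v1 where "length u2 = length v2" "length u2 \<ge> 1" "u = u1 @ u2" "v = v1 @ v2"
    and apart: "\<forall>w \<in> word_star {u, v}. \<not> R (u2 @ w) (v2 @ w)"
    using crit unfolding critical_tuple_def by blast
  moreover from this have "suffix_exp R (u2 @ s) (v2 @ s)"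
    using suffix_exp_appendD[of "a @ u1" "b @ v1"] exp len by simp
  ultimately have "R (drop 0 (u2 @ s)) (drop 0 (v2 @ s))"
    unfolding suffix_exp_def by (metis add_gr_0 length_append less_le_trans zero_less_one)
  then show False
    using apart s by simp
qed

text \<open>Blocks \<open>uv\<close> and \<open>vu\<close> rather than \<open>u\<close> and \<open>v\<close>, so that all words of \<open>m\<close> blocks are equally long.\<close>

definition block_word :: "'a list \<Rightarrow> 'a list \<Rightarrow> bool list \<Rightarrow> 'a list" where
  "block_word u v bs = concat (map (\<lambda>b. if b then u @ v else v @ u) bs)"

lemma length_block_word: "length (block_word u v bs) = length bs * (length u + length v)"
  by (induction bs) (auto simp: block_word_def)

lemma block_word_in_word_star: "block_word u v bs \<in> word_star {u, v}"
  unfolding block_word_def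
  by (rule concat_in_word_star) (auto intro: append_in_word_star word_star_base)

lemma block_word_Cons:
  "block_word u v (b # bs) = (if b then u @ v else v @ u) @ block_word u v bs"
  by (simp add: block_word_def)

lemma block_word_inj:
  assumes crit: "critical_tuple R u2 v2 u v" and "equivp R"
    and "length bs = length cs"
    and "suffix_exp R (block_word u v bs) (block_word u v cs)"
  shows "bs = cs"
  using assms(3,4)
proof (induction bs cs rule: list_induct2)
  case Nil
  then show ?case by simp
next
  case (Cons b bs c cs)
  have exp: "suffix_exp R ((if b then u @ v else v @ u) @ block_word u v bs)
      ((if c then u @ v else v @ u) @ block_word u v cs)"
    using Cons.prems by (simp only: block_word_Cons)
  then have "suffix_exp R (block_word u v bs) (block_word u v cs)"
    by (rule suffix_exp_appendD[rotated]) simp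
  then have "bs = cs" by (rule Cons.IH)
  define s where "s = block_word u v bs"
  have "\<not> suffix_exp R (v @ u @ s) (u @ v @ s)"
    using critical_tuple_not_suffix_exp[OF crit block_word_in_word_star, of v u] by (simp add: s_def)
  moreover have "suffix_exp R (v @ u @ s) (u @ v @ s)" if "b \<noteq> c"
  proof (cases b)
    case True
    then have "suffix_exp R (u @ v @ s) (v @ u @ s)"
      using exp that \<open>bs = cs\<close> by (simp add: s_def)
    then show ?thesis
      by (rule equivp_symp[OF equivp_suffix_exp[OF \<open>equivp R\<close>]])
  next
    case False
    then show ?thesis
      using exp that \<open>bs = cs\<close> by (simp add: s_def)
  qed
  ultimately show ?case
    using \<open>bs = cs\<close> by blast
qed

section \<open>Exponential growth\<close>

lemma card_le_card_quotient:
  assumes "equiv UNIV r" and "finite A" and "f ` X \<subseteq> A"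
    and "\<And>x y. x \<in> X \<Longrightarrow> y \<in> X \<Longrightarrow> (f x, f y) \<in> r \<Longrightarrow> x = y"
  shows "card X \<le> card (A // r)"
proof (rule card_inj_on_le)
  show "inj_on (\<lambda>x. r `` {f x}) X"
    using eq_equiv_class_iff[OF assms(1)] assms(4) by (auto intro: inj_onI)
  show "(\<lambda>x. r `` {f x}) ` X \<subseteq> A // r"
    using assms(3) by (auto intro: quotientI)
  show "finite (A // r)"
    using assms(2) unfolding quotient_def by auto
qed

lemma two_power_le_suffix_growth:
  fixes R :: "'a::finite list \<Rightarrow> 'a list \<Rightarrow> bool"
  assumes "equivp R" and crit: "critical_tuple R u2 v2 u v"
  shows "2 ^ m \<le> suffix_growth R (m * (length u + length v))"
proof -
  have "card {bs :: bool list. length bs = m} \<le> suffix_growth R (m * (length u + length v))"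
    unfolding suffix_growth_def
  proof (rule card_le_card_quotient[where f = "block_word u v"])
    show "equiv UNIV {(x, y). suffix_exp R x y}"
      using equivp_suffix_exp[OF \<open>equivp R\<close>] by (simp add: equivp_equiv)
    show "finite {xs :: 'a list. length xs \<le> m * (length u + length v)}"
      using finite_lists_length_le[of "UNIV :: 'a set"] by simp
  qed (auto simp: length_block_word intro: block_word_inj[OF crit \<open>equivp R\<close>])
  then show ?thesis
    using card_lists_length_eq[of "UNIV :: bool set" m] by simp
qed

lemma exp_growthI:
  assumes "k > 0" and "\<And>m. 2 ^ m \<le> \<gamma> (m * k)"
  shows "exp_growth \<gamma>"
proof -
  define c where "c = root k 2"
  have "c > 1"
    using assms(1) by (simp add: c_def)
  have "c ^ (m * k) = 2 ^ m" for m
    using assms(1) by (simp add: c_def mult.commute power_mult)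
  then have "c ^ (m * k) \<le> real (\<gamma> (m * k))" for m
    using assms(2)[of m] by (metis of_nat_le_iff of_nat_numeral of_nat_power)
  moreover have "m \<le> m * k" for m
    using assms(1) by simp
  ultimately have "\<exists>n\<ge>m. c ^ n \<le> real (\<gamma> n)" for m
    by blast
  then show ?thesis
    unfolding exp_growth_def infinite_nat_iff_unbounded_le using \<open>c > 1\<close> by blast
qed

lemma exp_growth_suffix_growth:
  fixes R :: "'a::finite list \<Rightarrow> 'a list \<Rightarrow> bool"
  assumes "equivp R" and crit: "critical_tuple R u2 v2 u v"
  shows "exp_growth (suffix_growth R)"
proof (rule exp_growthI)
  show "length u + length v > 0"
    using crit unfolding critical_tuple_def by auto
qed (rule two_power_le_suffix_growth[OF assms])

section \<open>The transformation monoid of a right congruence\<close>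

locale finite_right_congruence =
  fixes R :: "'a list \<Rightarrow> 'a list \<Rightarrow> bool"
  assumes right_cong: "right_congruence R"
    and fin_index: "finite_index R"
begin

lemma equivp: "equivp R"
  using right_cong unfolding right_congruence_def by blast

lemma R_eq_iff: "R p = R q \<longleftrightarrow> R p q"
  using equivp unfolding equivp_def by metis

lemma R_append_eq: "R x = R y \<Longrightarrow> R (x @ z) = R (y @ z)"
  using right_cong unfolding right_congruence_def R_eq_iff by blast

lemma finite_range_R: "finite (range R)"
proof -
  have "UNIV // {(x, y). R x y} = Collect ` range R"
    unfolding quotient_def by auto
  then have "finite (Collect ` range R)"
    using fin_index unfolding finite_index_def by simp
  then show ?thesis
    by (rule finite_imageD) (auto intro: inj_onI Collect_inj)
qed

text \<open>The \<open>R\<close>-class of \<open>p\<close> is represented by the predicate \<open>R p\<close>; a word \<open>x\<close> maps it to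
  the class of \<open>p @ x\<close>.\<close>

definition same_action :: "'a list \<Rightarrow> 'a list \<Rightarrow> bool" where
  "same_action x y \<longleftrightarrow> (\<forall>p. R (p @ x) = R (p @ y))"

definition action_image :: "'a list \<Rightarrow> ('a list \<Rightarrow> bool) set" where
  "action_image x = range (\<lambda>p. R (p @ x))"

definition action_graph :: "'a list \<Rightarrow> (('a list \<Rightarrow> bool) \<times> ('a list \<Rightarrow> bool)) set" where
  "action_graph x = range (\<lambda>p. (R p, R (p @ x)))"

lemma same_action_refl: "same_action x x"
  by (simp add: same_action_def)

lemma same_action_sym: "same_action x y \<Longrightarrow> same_action y x"
  by (simp add: same_action_def)

lemma same_action_trans [trans]: "same_action x y \<Longrightarrow> same_action y z \<Longrightarrow> same_action x z"
  by (simp add: same_action_def)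

lemma same_action_append_left: "same_action x y \<Longrightarrow> same_action (a @ x) (a @ y)"
  unfolding same_action_def by (metis append_assoc)

lemma same_action_append_right: "same_action x y \<Longrightarrow> same_action (x @ b) (y @ b)"
  unfolding same_action_def by (metis append_assoc R_append_eq)

lemma same_action_if_action_graph_eq:
  assumes "action_graph x = action_graph y"
  shows "same_action x y"
  unfolding same_action_def
proof
  fix p
  have "(R p, R (p @ x)) \<in> action_graph y"
    using assms unfolding action_graph_def by blast
  then obtain q where "R p = R q" and "R (p @ x) = R (q @ y)"
    unfolding action_graph_def by auto
  then show "R (p @ x) = R (p @ y)"
    using R_append_eq by metis
qed

lemma finite_range_action_graph: "finite (range action_graph)"
proof (rule finite_subset)
  show "range action_graph \<subseteq> Pow (range R \<times> range R)"
    unfolding action_graph_def by auto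
qed (use finite_range_R in simp)

lemma same_action_word_power_period:
  assumes "same_action (word_power x a) (word_power x (a + d))"
  shows "same_action (word_power x (a + t)) (word_power x (a + t + q * d))"
proof (induction q)
  case 0
  then show ?case by (simp add: same_action_refl)
next
  case (Suc q)
  have "same_action (word_power x a @ word_power x (t + q * d))
      (word_power x (a + d) @ word_power x (t + q * d))"
    using assms by (rule same_action_append_right)
  then have "same_action (word_power x (a + t + q * d)) (word_power x (a + t + Suc q * d))"
    by (simp add: word_power_add[symmetric] algebra_simps)
  with Suc.IH show ?case
    by (rule same_action_trans)
qed

text \<open>Pigeonhole on the finitely many action graphs: \<open>x\<^sup>a\<close> and \<open>x\<^sup>a\<^sup>+\<^sup>d\<close> act alike for some
  \<open>a, d > 0\<close>; then \<open>x\<^sup>N\<close> is idempotent for \<open>N = a d\<close>, a multiple of the period beyond \<open>a\<close>.\<close>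

lemma exists_idempotent_power:
  "\<exists>N>0. same_action (word_power x N @ word_power x N) (word_power x N)"
proof -
  have "finite (range (\<lambda>n. action_graph (word_power x (Suc n))))"
    using finite_range_action_graph by (rule finite_subset[rotated]) auto
  then have "\<not> inj (\<lambda>n. action_graph (word_power x (Suc n)))"
    using finite_imageD infinite_UNIV_nat by blast
  then obtain i j where "i < j"
    and "action_graph (word_power x (Suc i)) = action_graph (word_power x (Suc j))"
    unfolding inj_def by (metis linorder_neqE_nat)
  then have period: "same_action (word_power x (Suc i)) (word_power x (Suc i + (j - i)))"
    by (simp add: same_action_if_action_graph_eq)
  define N where "N = Suc i * (j - i)"
  have "Suc i \<le> N"
    unfolding N_def using \<open>i < j\<close> mult_le_mono2[of 1 "j - i" "Suc i"] by simp
  then have "Suc i + (N - Suc i) = N" and "N + Suc i * (j - i) = N + N"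
    by (simp_all add: N_def)
  then have "same_action (word_power x N) (word_power x (N + N))"
    using same_action_word_power_period[OF period, of "N - Suc i" "Suc i"] by simp
  moreover have "N > 0"
    using \<open>i < j\<close> by (simp add: N_def)
  ultimately show ?thesis
    by (auto simp: word_power_add intro: same_action_sym)
qed

lemma finite_action_image: "finite (action_image x)"
  unfolding action_image_def using finite_range_R by (rule finite_subset[rotated]) auto

lemma action_image_append_subset: "action_image (y @ x) \<subseteq> action_image x"
  unfolding action_image_def
proof
  fix c
  assume "c \<in> range (\<lambda>p. R (p @ y @ x))"
  then obtain p where "c = R ((p @ y) @ x)"
    by auto
  then show "c \<in> range (\<lambda>p. R (p @ x))"
    by blast
qed

lemma same_action_if_minimal_image:
  assumes ee: "same_action (e @ e) e" and hh: "same_action (h @ h) h"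
    and h1: "h = e @ h1" and h2: "h = h2 @ e"
    and rank: "card (action_image e) \<le> card (action_image h)"
  shows "same_action h e"
  unfolding same_action_def
proof
  fix p
  have "action_image h \<subseteq> action_image e"
    using action_image_append_subset[of h2 e] h2 by simp
  then have "action_image h = action_image e"
    using card_seteq[OF finite_action_image _ rank] by blast
  then have "R (p @ e) \<in> action_image h"
    unfolding action_image_def by simp
  then obtain q where q: "R (p @ e) = R (q @ h)"
    unfolding action_image_def by auto
  have eh: "same_action (e @ h) h"
    using same_action_append_right[OF ee, of h1] h1 by simp
  have "R (p @ h) = R (p @ e @ h)"
    using eh unfolding same_action_def by simp
  also have "\<dots> = R (q @ h @ h)"
    using R_append_eq[OF q, of h] by simp
  also have "\<dots> = R (q @ h)"
    using hh unfolding same_action_def by simp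
  also have "\<dots> = R (p @ e)"
    using q by simp
  finally show "R (p @ h) = R (p @ e)" .
qed

definition minimal_idempotent :: "'a list set \<Rightarrow> 'a list \<Rightarrow> bool" where
  "minimal_idempotent A e \<longleftrightarrow> e \<in> word_star A \<and> same_action (e @ e) e \<and>
     (\<forall>y \<in> word_star A. card (action_image e) \<le> card (action_image y))"

lemma exists_minimal_idempotent: "\<exists>e. minimal_idempotent A e"
proof -
  obtain z where z: "z \<in> word_star A"
    and z_min: "\<forall>y \<in> word_star A. card (action_image z) \<le> card (action_image y)"
    using ex_has_least_nat[of "\<lambda>y. y \<in> word_star A" "[]" "\<lambda>y. card (action_image y)"]
      Nil_in_word_star by blast
  obtain N where "N > 0"
    and idem: "same_action (word_power z N @ word_power z N) (word_power z N)"
    using exists_idempotent_power by blast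
  have "word_power z N = word_power z (N - 1) @ z"
    using \<open>N > 0\<close> word_power_Suc'[of z "N - 1"] by simp
  then have "card (action_image (word_power z N)) \<le> card (action_image z)"
    by (metis action_image_append_subset card_mono finite_action_image)
  then have "minimal_idempotent A (word_power z N)"
    unfolding minimal_idempotent_def using z z_min idem word_power_in_word_star by fastforce
  then show ?thesis ..
qed

lemma minimal_idempotent_absorbs:
  assumes e: "minimal_idempotent A e" and x: "x \<in> word_star A"
  obtains h0 where "h0 @ x @ e \<in> word_star A" and "same_action (h0 @ x @ e) e"
proof -
  define g where "g = e @ x @ e"
  have g: "g \<in> word_star A"
    using e x unfolding g_def minimal_idempotent_def by (simp add: append_in_word_star)
  obtain M where "M > 0"
    and idem: "same_action (word_power g M @ word_power g M) (word_power g M)"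
    using exists_idempotent_power by blast
  define h0 where "h0 = word_power g (M - 1) @ e"
  have ends: "word_power g M = h0 @ x @ e"
    using \<open>M > 0\<close> word_power_Suc'[of g "M - 1"] by (simp add: h0_def g_def)
  have starts: "word_power g M = e @ (x @ e @ word_power g (M - 1))"
    using \<open>M > 0\<close> word_power_Suc[of g "M - 1"] by (simp add: g_def)
  have in_star: "word_power g M \<in> word_star A"
    using g by (rule word_power_in_word_star)
  then have "card (action_image e) \<le> card (action_image (word_power g M))"
    using e unfolding minimal_idempotent_def by blast
  then have "same_action (word_power g M) e"
    using same_action_if_minimal_image[OF _ idem starts] ends e
    unfolding minimal_idempotent_def by (metis append_assoc)
  then show thesis
    using that in_star ends by simp
qed

lemma word_star_append_same_action:
  assumes acts: "\<forall>a \<in> A. same_action a e" and ee: "same_action (e @ e) e"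
    and "w \<in> word_star A" and "a \<in> A"
  shows "same_action (w @ a) e"
  using \<open>w \<in> word_star A\<close>
proof (induction rule: word_star_induct)
  case Nil
  then show ?case using acts \<open>a \<in> A\<close> by simp
next
  case (append b w)
  have "same_action ((b @ w) @ a) (b @ e)"
    using same_action_append_left[OF append.IH] by simp
  also have "same_action \<dots> (e @ e)"
    using acts append.hyps by (blast intro: same_action_append_right)
  also note ee
  finally show ?case .
qed

lemma exists_stable_critical_tuple:
  assumes crit: "critical_tuple R u2 v2 u v"
  shows "\<exists>u2 v2 u v. critical_tuple R u2 v2 u v \<and>
    (\<forall>w \<in> word_star {u, v}. R (u2 @ u) (u2 @ w @ u) \<and> R (v2 @ u) (v2 @ w @ u))"
proof -
  obtain e where e: "minimal_idempotent {u, v} e"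
    using exists_minimal_idempotent by blast
  obtain x where x: "x @ u @ e \<in> word_star {u, v}" "same_action (x @ u @ e) e"
    using minimal_idempotent_absorbs[OF e word_star_base[of u]] by blast
  obtain y where y: "y @ v @ e \<in> word_star {u, v}" "same_action (y @ v @ e) e"
    using minimal_idempotent_absorbs[OF e word_star_base[of v]] by blast
  define hu hv where "hu = x @ u @ e" and "hv = y @ v @ e"
  have "critical_tuple R (u2 @ e) (v2 @ e) hu hv"
    using critical_tuple_append[OF crit _ x(1) y(1)] e
    unfolding hu_def hv_def minimal_idempotent_def by blast
  moreover have "same_action hu (w @ hu)" if "w \<in> word_star {hu, hv}" for w
  proof -
    have "same_action hu e" and "same_action (w @ hu) e"
      using word_star_append_same_action[of "{hu, hv}" e w hu] that x(2) y(2) e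
      unfolding hu_def hv_def minimal_idempotent_def by simp_all
    then show ?thesis
      by (blast intro: same_action_sym same_action_trans)
  qed
  then have "R (p @ hu) (p @ w @ hu)" if "w \<in> word_star {hu, hv}" for p w
    using that R_eq_iff unfolding same_action_def by blast
  ultimately show ?thesis
    by blast
qed

end

theorem proposition15:
  fixes R :: "'a::finite list \<Rightarrow> 'a list \<Rightarrow> bool"
  assumes "right_congruence R"
    and "finite_index R"
    and "\<exists>u2 v2 u v. critical_tuple R u2 v2 u v"
  shows "exp_growth (suffix_growth R) \<and>
    (\<exists>u2 v2 u v. critical_tuple R u2 v2 u v \<and>
       (\<forall>w \<in> word_star {u, v}. R (u2 @ u) (u2 @ w @ u) \<and> R (v2 @ u) (v2 @ w @ u)))"
proof -
  interpret finite_right_congruence R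
    using assms(1,2) by unfold_locales
  obtain u2 v2 u v where crit: "critical_tuple R u2 v2 u v"
    using assms(3) by blast
  show ?thesis
    using exp_growth_suffix_growth[OF equivp crit] exists_stable_critical_tuple[OF crit] by blast
qed

end
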